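(* Let $\mathbf{B},\mathbf{C}$ be structures over a signature $\sigma$ such that $\mathbf{C}$ is a substructure of $\mathbf{B}$ and there exists a retraction $h$ from $\mathbf{B}$ to $\mathbf{C}$. Then for every subset $S\subseteq\mathrm{dom}(\mathbf{B})$ and every structure $\mathbf{D}$ over $\sigma$, $|\mathrm{homs}(\mathbf{B},S,\mathbf{D})|\ge|\mathrm{homs}(\mathbf{C},S\cap\mathrm{dom}(\mathbf{C}),\mathbf{D})|$.
   Context: A structure $\mathbf{A}$ over a signature $\sigma$ (finite set of relation symbols with arities) has a finite universe $\mathrm{dom}(\mathbf{A})$ and relations $R^{\mathbf{A}}\subseteq\mathrm{dom}(\mathbf{A})^{\mathrm{ar}(R)}$. A homomorphism $\mathbf{A}\to\mathbf{D}$ is a map $g:\mathrm{dom}(\mathbf{A})\to\mathrm{dom}(\mathbf{D})$ with $g(\bar t)\in R^{\mathbf{D}}$ for all $\bar t\in R^{\mathbf{A}}$, $R\in\sigma$. $\mathbf{C}$ is a substructure of $\mathbf{B}$ if $\mathrm{dom}(\mathbf{C})\subseteq\mathrm{dom}(\mathbf{B})$ and $R^{\mathbf{C}}\subseteq R^{\mathbf{B}}$ for all $R\in\sigma$. A retraction from $\mathbf{B}$ to a substructure $\mathbf{C}$ is a homomorphism $\mathbf{B}\to\mathbf{C}$ that is the identity on $\mathrm{dom}(\mathbf{C})$. For $S\subseteq\mathrm{dom}(\mathbf{A})$, $\mathrm{homs}(\mathbf{A},S,\mathbf{D})=\{g|_S : g \text{ a homomorphism } \mathbf{A}\to\mathbf{D}\}$.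 *)

theory Defs
  imports "HOL-Library.FuncSet"
begin

record ('r, 'a) struct =
  dom :: "'a set"
  rel :: "'r \<Rightarrow> 'a list set"

definition signature :: "'r set \<Rightarrow> bool" where
  "signature \<sigma> \<longleftrightarrow> finite \<sigma>"

definition is_structure :: "'r set \<Rightarrow> ('r \<Rightarrow> nat) \<Rightarrow> ('r, 'a) struct \<Rightarrow> bool" where
  "is_structure \<sigma> ar A \<longleftrightarrow> finite (dom A) \<and>
     (\<forall>R\<in>\<sigma>. \<forall>t\<in>rel A R. length t = ar R \<and> set t \<subseteq> dom A)"

definition is_hom :: "'r set \<Rightarrow> ('r, 'a) struct \<Rightarrow> ('r, 'b) struct \<Rightarrow> ('a \<Rightarrow> 'b) \<Rightarrow> bool" where
  "is_hom \<sigma> A D g \<longleftrightarrow> g \<in> dom A \<rightarrow>\<^sub>E dom D \<and>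
     (\<forall>R\<in>\<sigma>. \<forall>t\<in>rel A R. map g t \<in> rel D R)"

definition substructure :: "'r set \<Rightarrow> ('r, 'a) struct \<Rightarrow> ('r, 'a) struct \<Rightarrow> bool" where
  "substructure \<sigma> C B \<longleftrightarrow> dom C \<subseteq> dom B \<and> (\<forall>R\<in>\<sigma>. rel C R \<subseteq> rel B R)"

definition retraction :: "'r set \<Rightarrow> ('r, 'a) struct \<Rightarrow> ('r, 'a) struct \<Rightarrow> ('a \<Rightarrow> 'a) \<Rightarrow> bool" where
  "retraction \<sigma> B C h \<longleftrightarrow> is_hom \<sigma> B C h \<and> (\<forall>x\<in>dom C. h x = x)"

definition homs :: "'r set \<Rightarrow> ('r, 'a) struct \<Rightarrow> 'a set \<Rightarrow> ('r, 'b) struct \<Rightarrow> ('a \<Rightarrow> 'b) set" where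
  "homs \<sigma> A S D = {restrict g S | g. is_hom \<sigma> A D g}"

end

theory Submission
  imports Defs
begin

text \<open>Every homomorphism \<open>g\<close> from \<open>C\<close> extends to the homomorphism \<open>g \<circ> h\<close> from \<open>B\<close>,
which agrees with \<open>g\<close> on \<open>dom C\<close>; so every partial homomorphism of \<open>C\<close> on
\<open>S \<inter> dom C\<close> is the restriction of a partial homomorphism of \<open>B\<close> on \<open>S\<close>.\<close>

lemma is_hom_comp:
  assumes "is_structure \<sigma> ar A" and "is_hom \<sigma> A B f" and "is_hom \<sigma> B C g"
  shows "is_hom \<sigma> A C (restrict (g \<circ> f) (dom A))"
  unfolding is_hom_def
proof (intro conjI ballI)
  show "restrict (g \<circ> f) (dom A) \<in> dom A \<rightarrow>\<^sub>E dom C"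
    using assms(2,3) by (auto simp: is_hom_def PiE_def Pi_def)
next
  fix R t assume R: "R \<in> \<sigma>" and t: "t \<in> rel A R"
  have "set t \<subseteq> dom A" using assms(1) R t by (auto simp: is_structure_def)
  then have "map (restrict (g \<circ> f) (dom A)) t = map g (map f t)"
    by (auto intro: map_cong)
  moreover have "map g (map f t) \<in> rel C R"
    using assms(2,3) R t unfolding is_hom_def by blast
  ultimately show "map (restrict (g \<circ> f) (dom A)) t \<in> rel C R"
    by (simp only:)
qed

lemma restrict_in_homs:
  assumes "is_hom \<sigma> A D g"
  shows "restrict g S \<in> homs \<sigma> A S D"
  using assms by (auto simp: homs_def)

lemma homs_subset_PiE:
  assumes "S \<subseteq> dom A"
  shows "homs \<sigma> A S D \<subseteq> S \<rightarrow>\<^sub>E dom D"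
  using assms by (auto simp: homs_def is_hom_def PiE_def Pi_def)

lemma finite_homs:
  assumes "S \<subseteq> dom A" and "finite S" and "finite (dom D)"
  shows "finite (homs \<sigma> A S D)"
  using assms(2,3) by (intro finite_subset[OF homs_subset_PiE[OF assms(1)]] finite_PiE)

lemma homs_restrict:
  assumes "T \<subseteq> S"
  shows "(\<lambda>f. restrict f T) ` homs \<sigma> A S D = homs \<sigma> A T D"
proof -
  have "(\<lambda>f. restrict f T) ` homs \<sigma> A S D = {restrict (restrict g S) T | g. is_hom \<sigma> A D g}"
    unfolding homs_def by blast
  also have "\<dots> = homs \<sigma> A T D"
    using assms by (simp add: homs_def Int_absorb1)
  finally show ?thesis .
qed

lemma homs_retract_subset:
  assumes "is_structure \<sigma> ar B" and "substructure \<sigma> C B" and "retraction \<sigma> B C h"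
    and "T \<subseteq> dom C"
  shows "homs \<sigma> C T D \<subseteq> homs \<sigma> B T D"
proof
  fix f assume "f \<in> homs \<sigma> C T D"
  then obtain g where f: "f = restrict g T" and g: "is_hom \<sigma> C D g"
    by (auto simp: homs_def)
  have h: "is_hom \<sigma> B C h" and h_id: "\<forall>x\<in>dom C. h x = x"
    using assms(3) by (auto simp: retraction_def)
  have ext: "is_hom \<sigma> B D (restrict (g \<circ> h) (dom B))"
    using is_hom_comp[OF assms(1) h g] .
  have "T \<subseteq> dom B"
    using assms(2,4) by (auto simp: substructure_def)
  then have agree: "restrict (restrict (g \<circ> h) (dom B)) T = f"
    unfolding f using h_id assms(4) by (intro restrict_ext) auto
  show "f \<in> homs \<sigma> B T D"
    unfolding agree[symmetric] by (rule restrict_in_homs[OF ext])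
qed

theorem lemma5p4:
  fixes \<sigma> :: "'r set" and ar :: "'r \<Rightarrow> nat"
    and B C :: "('r, 'a) struct" and D :: "('r, 'b) struct"
    and h :: "'a \<Rightarrow> 'a" and S :: "'a set"
  assumes "signature \<sigma>"
    and "is_structure \<sigma> ar B" and "is_structure \<sigma> ar C" and "is_structure \<sigma> ar D"
    and "substructure \<sigma> C B"
    and "retraction \<sigma> B C h"
    and "S \<subseteq> dom B"
  shows "card (homs \<sigma> B S D) \<ge> card (homs \<sigma> C (S \<inter> dom C) D)"
proof -
  have S_C: "S \<inter> dom C \<subseteq> S" by blast
  have fin_B: "finite (dom B)" and fin_D: "finite (dom D)"
    using assms(2,4) by (auto simp: is_structure_def)
  have fin_S: "finite S"
    by (rule finite_subset[OF assms(7) fin_B])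
  have "homs \<sigma> C (S \<inter> dom C) D \<subseteq> homs \<sigma> B (S \<inter> dom C) D"
    using assms(2,5,6) by (rule homs_retract_subset) simp
  also have "\<dots> = (\<lambda>f. restrict f (S \<inter> dom C)) ` homs \<sigma> B S D"
    by (rule homs_restrict[OF S_C, symmetric])
  finally have "card (homs \<sigma> C (S \<inter> dom C) D)
      \<le> card ((\<lambda>f. restrict f (S \<inter> dom C)) ` homs \<sigma> B S D)"
    using finite_homs[OF assms(7) fin_S fin_D] by (intro card_mono finite_imageI)
  also have "\<dots> \<le> card (homs \<sigma> B S D)"
    using finite_homs[OF assms(7) fin_S fin_D] by (rule card_image_le)
  finally show ?thesis .
qed

end
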